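(* Let $V=\{v_1,\dots,v_k\}$ be an amenable collection of vectors subordinate to a $\mathbb{Q}$-nef partition $E_1,\dots,E_{k+1}$ of a complete fan $\Sigma$ in $M_\mathbb{R}$. Then $\mathrm{span}_\mathbb{Z}(v_1,\dots,v_k)$ is a saturated sublattice of $N$. In particular, there is a basis of $N$ containing $v_1,\dots,v_k$.
   Context: $M$ lattice of rank $n$, $N=\mathrm{Hom}(M,\mathbb{Z})$; $\Sigma$ complete fan of strictly convex rational cones in $M_\mathbb{R}$, $\Sigma[1]\subset M$ its primitive ray generators. A $\mathbb{Q}$-nef partition is an ordered partition $\Sigma[1]=E_1\sqcup\dots\sqcup E_{k+1}$ (with convex $\Sigma$-piecewise linear rational functions $\varphi_i$, $\varphi_i(\rho)=\delta_{ij}$ for $\rho\in E_j$). An amenable collection subordinate to it is $V=\{v_1,\dots,v_k\}\subset N$ with $\langle v_i,\rho\rangle=-1$ for $\rho\in E_i$, $\langle v_i,\rho\rangle\ge0$ for $\rho\in E_j$ with $i<j\le k+1$, and $\langle v_i,\rho\rangle=0$ for $\rho\in E_j$ with $j<i$. *)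

theory Defs
  imports "HOL-Analysis.Analysis"
begin

text \<open>The lattice M of rank n is Z^n, modelled as int^'n (finite index type 'n,
  n = CARD('n)); M_R = real^'n. The dual lattice N = Hom(M,Z) is identified with int^'n via
  the standard pairing.\<close>

definition latr :: "int^'n \<Rightarrow> real^'n" where
  "latr x = (\<chi> i. real_of_int (x $ i))"

definition pairing :: "int^'n \<Rightarrow> int^'n \<Rightarrow> int" where
  "pairing v m = (\<Sum>i\<in>UNIV. v $ i * m $ i)"

definition rat_poly_cone :: "(real^'n) set \<Rightarrow> bool" where
  "rat_poly_cone \<sigma> \<longleftrightarrow> (\<exists>S::(int^'n) set. finite S \<and>
      \<sigma> = {\<Sum>s\<in>S. c s *\<^sub>R latr s | c. \<forall>s\<in>S. 0 \<le> c s})"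

definition strictly_convex_cone :: "(real^'n) set \<Rightarrow> bool" where
  "strictly_convex_cone \<sigma> \<longleftrightarrow> (\<forall>x. x \<in> \<sigma> \<and> - x \<in> \<sigma> \<longrightarrow> x = 0)"

definition cone_face :: "(real^'n) set \<Rightarrow> (real^'n) set \<Rightarrow> bool" where
  "cone_face \<tau> \<sigma> \<longleftrightarrow> (\<exists>u::real^'n. (\<forall>x\<in>\<sigma>. 0 \<le> u \<bullet> x) \<and> \<tau> = {x\<in>\<sigma>. u \<bullet> x = 0})"

definition is_fan :: "(real^'n) set set \<Rightarrow> bool" where
  "is_fan \<Sigma> \<longleftrightarrow> finite \<Sigma> \<and>
     (\<forall>\<sigma>\<in>\<Sigma>. rat_poly_cone \<sigma> \<and> strictly_convex_cone \<sigma>) \<and>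
     (\<forall>\<sigma>\<in>\<Sigma>. \<forall>\<tau>. cone_face \<tau> \<sigma> \<longrightarrow> \<tau> \<in> \<Sigma>) \<and>
     (\<forall>\<sigma>\<in>\<Sigma>. \<forall>\<sigma>'\<in>\<Sigma>. cone_face (\<sigma> \<inter> \<sigma>') \<sigma> \<and> cone_face (\<sigma> \<inter> \<sigma>') \<sigma>')"

definition complete_fan :: "(real^'n) set set \<Rightarrow> bool" where
  "complete_fan \<Sigma> \<longleftrightarrow> is_fan \<Sigma> \<and> \<Union>\<Sigma> = UNIV"

definition primitive :: "int^'n \<Rightarrow> bool" where
  "primitive \<rho> \<longleftrightarrow> \<rho> \<noteq> 0 \<and> (\<forall>(m::int) (y::int^'n). \<rho> = m *s y \<longrightarrow> \<bar>m\<bar> = 1)"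

definition rays :: "(real^'n) set set \<Rightarrow> (int^'n) set" where
  "rays \<Sigma> = {\<rho>. primitive \<rho> \<and> {c *\<^sub>R latr \<rho> | c. 0 \<le> c} \<in> \<Sigma>}"

definition rational_pl :: "(real^'n) set set \<Rightarrow> (real^'n \<Rightarrow> real) \<Rightarrow> bool" where
  "rational_pl \<Sigma> \<phi> \<longleftrightarrow> (\<forall>\<sigma>\<in>\<Sigma>. \<exists>u::real^'n. (\<forall>i. u $ i \<in> \<rat>) \<and> (\<forall>x\<in>\<sigma>. \<phi> x = u \<bullet> x))"

definition Q_nef_partition ::
  "(real^'n) set set \<Rightarrow> nat \<Rightarrow> (nat \<Rightarrow> (int^'n) set) \<Rightarrow> (nat \<Rightarrow> real^'n \<Rightarrow> real) \<Rightarrow> bool" where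
  "Q_nef_partition \<Sigma> k E \<phi> \<longleftrightarrow>
     (\<forall>i\<in>{1..k+1}. E i \<noteq> {}) \<and>
     (\<forall>i\<in>{1..k+1}. \<forall>j\<in>{1..k+1}. i \<noteq> j \<longrightarrow> E i \<inter> E j = {}) \<and>
     (\<Union>i\<in>{1..k+1}. E i) = rays \<Sigma> \<and>
     (\<forall>i\<in>{1..k+1}. rational_pl \<Sigma> (\<phi> i) \<and> convex_on UNIV (\<phi> i) \<and>
        (\<forall>j\<in>{1..k+1}. \<forall>\<rho>\<in>E j. \<phi> i (latr \<rho>) = (if i = j then 1 else 0)))"

definition amenable :: "nat \<Rightarrow> (nat \<Rightarrow> (int^'n) set) \<Rightarrow> (nat \<Rightarrow> int^'n) \<Rightarrow> bool" where
  "amenable k E v \<longleftrightarrow> (\<forall>i\<in>{1..k}.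
     (\<forall>\<rho>\<in>E i. pairing (v i) \<rho> = -1) \<and>
     (\<forall>j\<in>{i<..k+1}. \<forall>\<rho>\<in>E j. 0 \<le> pairing (v i) \<rho>) \<and>
     (\<forall>j\<in>{1..<i}. \<forall>\<rho>\<in>E j. pairing (v i) \<rho> = 0))"

definition zspan :: "nat \<Rightarrow> (nat \<Rightarrow> int^'n) \<Rightarrow> (int^'n) set" where
  "zspan k v = {\<Sum>i\<in>{1..k}. a i *s v i | a. True}"

definition saturated :: "(int^'n) set \<Rightarrow> bool" where
  "saturated L \<longleftrightarrow> (\<forall>(m::int) w. m \<noteq> 0 \<and> m *s w \<in> L \<longrightarrow> w \<in> L)"

definition lattice_basis :: "('n \<Rightarrow> int^'n) \<Rightarrow> bool" where
  "lattice_basis b \<longleftrightarrow> (\<forall>x::int^'n. \<exists>!c::'n \<Rightarrow> int. x = (\<Sum>j\<in>UNIV. c j *s b j))"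

end

theory Submission
  imports Defs
begin

text \<open>Choose rays \<open>\<rho>\<^sub>j \<in> E\<^sub>j\<close>. By amenability the matrix \<open>\<langle>v\<^sub>i, \<rho>\<^sub>j\<rangle>\<close> is triangular with
  diagonal entries \<open>-1\<close>, so from \<open>\<Sum> a\<^sub>i v\<^sub>i = m w\<close> pairing with \<open>\<rho>\<^sub>1, \<rho>\<^sub>2, \<dots>\<close> in turn shows that
  \<open>m\<close> divides every \<open>a\<^sub>j\<close>. This is saturation, and it also says that each \<open>v\<^sub>K\<^sub>+\<^sub>1\<close> is
  primitive modulo \<open>span(v\<^sub>1, \<dots>, v\<^sub>K)\<close>. A basis containing the \<open>v\<^sub>i\<close> is then built one vector
  at a time: Euclidean reduction of the coordinates of \<open>v\<^sub>K\<^sub>+\<^sub>1\<close> outside the vectors already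
  placed leaves a single nonzero coordinate, which primitivity forces to be a unit.\<close>

lemma lattice_basis_spans:
  assumes "lattice_basis b"
  obtains c where "x = (\<Sum>j\<in>UNIV. c j *s b j)"
  using assms unfolding lattice_basis_def by blast

lemma lattice_basis_indep:
  fixes b :: "'n::finite \<Rightarrow> int^'n"
  assumes B: "lattice_basis b" and c: "(\<Sum>j\<in>UNIV. c j *s b j) = 0"
  shows "c j = 0"
proof -
  obtain c0 where c0: "\<And>c'. (0::int^'n) = (\<Sum>j\<in>UNIV. c' j *s b j) \<Longrightarrow> c' = c0"
    using B unfolding lattice_basis_def by (metis (no_types))
  have "c = c0" using c by (intro c0) simp
  moreover have "(\<lambda>_. 0) = c0" by (intro c0) simp
  ultimately show "c j = 0" by (metis (mono_tags))
qed

lemma lattice_basisI: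
  fixes b :: "'n::finite \<Rightarrow> int^'n"
  assumes spans: "\<And>x. \<exists>c. x = (\<Sum>j\<in>UNIV. c j *s b j)"
    and indep: "\<And>c j. (\<Sum>j\<in>UNIV. c j *s b j) = 0 \<Longrightarrow> c j = 0"
  shows "lattice_basis b"
  unfolding lattice_basis_def
proof
  fix x
  obtain c where c: "x = (\<Sum>j\<in>UNIV. c j *s b j)" using spans by blast
  show "\<exists>!c. x = (\<Sum>j\<in>UNIV. c j *s b j)"
  proof (rule ex1I[of _ c])
    fix c' assume c': "x = (\<Sum>j\<in>UNIV. c' j *s b j)"
    have "(\<Sum>j\<in>UNIV. (\<lambda>j. c' j - c j) j *s b j) = 0"
      using c c' by (simp only: vector_sub_rdistrib sum_subtractf) simp
    then have "\<And>j. c' j - c j = 0" by (rule indep)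
    then show "c' = c" by (simp add: fun_eq_iff)
  qed (rule c)
qed

lemma lattice_basis_axis: "lattice_basis (\<lambda>j::'n::finite. axis j (1::int))"
proof -
  have coords: "(\<Sum>j\<in>UNIV. c j *s axis j (1::int)) = (\<chi> i. c i)" for c :: "'n \<Rightarrow> int"
    by (simp add: vec_eq_iff axis_def if_distrib cong: if_cong)
  show ?thesis
  proof (rule lattice_basisI, unfold coords)
    show "\<exists>c. x = (\<chi> i. c i)" for x :: "int^'n"
      by (rule exI[of _ "\<lambda>i. x $ i"]) (simp add: vec_eq_iff)
  qed (simp add: vec_eq_iff)
qed

lemma lincomb_fun_upd:
  fixes b :: "'n::finite \<Rightarrow> int^'n"
  shows "(\<Sum>l\<in>UNIV. e l *s (b(j0 := y)) l) = (\<Sum>l\<in>UNIV. e l *s b l) + e j0 *s (y - b j0)"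
proof -
  have "(\<Sum>l\<in>UNIV. e l *s (b(j0 := y)) l)
      = (\<Sum>l\<in>UNIV. e l *s b l + (if l = j0 then e j0 *s (y - b j0) else 0))"
    by (rule sum.cong) (auto simp: vec_eq_iff algebra_simps)
  then show ?thesis by (simp add: sum.distrib)
qed

lemma lattice_basis_fun_upd:
  fixes b :: "'n::finite \<Rightarrow> int^'n"
  assumes B: "lattice_basis b" and u: "u * u = 1" and d: "d j0 = 0"
  shows "lattice_basis (b(j0 := u *s b j0 + (\<Sum>l\<in>UNIV. d l *s b l)))"
    (is "lattice_basis ?b'")
proof -
  have coords: "(\<Sum>l\<in>UNIV. e l *s ?b' l)
      = (\<Sum>l\<in>UNIV. (if l = j0 then e j0 * u else e l + e j0 * d l) *s b l)" for e
  proof -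
    have "(\<Sum>l\<in>UNIV. (if l = j0 then e j0 * u else e l + e j0 * d l) *s b l)
        = (\<Sum>l\<in>UNIV. e l *s b l + (if l = j0 then (e j0 * (u - 1)) *s b j0 else 0) + (e j0 * d l) *s b l)"
      by (rule sum.cong) (auto simp: d vec_eq_iff algebra_simps)
    also have "\<dots> = (\<Sum>l\<in>UNIV. e l *s b l) + e j0 *s (?b' j0 - b j0)"
      by (simp add: sum.distrib vec_eq_iff algebra_simps sum_distrib_left)
    finally show ?thesis by (simp only: lincomb_fun_upd fun_upd_same)
  qed
  show ?thesis
  proof (rule lattice_basisI)
    fix x
    obtain c where c: "x = (\<Sum>l\<in>UNIV. c l *s b l)" using B by (rule lattice_basis_spans)
    define e where "e l = (if l = j0 then u * c j0 else c l - u * c j0 * d l)" for l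
    have unit: "u * c j0 * u = c j0" using u by (simp add: algebra_simps)
    have "(\<Sum>l\<in>UNIV. e l *s ?b' l) = x"
      unfolding coords c by (intro sum.cong) (auto simp: e_def unit)
    then show "\<exists>e. x = (\<Sum>l\<in>UNIV. e l *s ?b' l)" by metis
  next
    fix e j assume "(\<Sum>l\<in>UNIV. e l *s ?b' l) = 0"
    then have "(\<Sum>l\<in>UNIV. (if l = j0 then e j0 * u else e l + e j0 * d l) *s b l) = 0"
      by (simp only: coords)
    then have z: "\<And>l. (if l = j0 then e j0 * u else e l + e j0 * d l) = 0"
      by (rule lattice_basis_indep[OF B])
    then have "e j0 = 0" using u by (metis mult_eq_0_iff zero_neq_one)
    then show "e j = 0" using z[of j] by (auto split: if_splits)
  qed
qed

lemma lattice_basis_concentrate_outside: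
  fixes b :: "'n::finite \<Rightarrow> int^'n" and J :: "'n set"
  assumes "lattice_basis b"
  obtains b' c where "lattice_basis b'" "\<forall>j\<in>J. b' j = b j" "x = (\<Sum>j\<in>UNIV. c j *s b' j)"
    "\<And>j l. j \<notin> J \<Longrightarrow> l \<notin> J \<Longrightarrow> c j \<noteq> 0 \<Longrightarrow> c l \<noteq> 0 \<Longrightarrow> j = l"
proof -
  have "\<exists>b' c'. lattice_basis b' \<and> (\<forall>j\<in>J. b' j = b j) \<and> x = (\<Sum>j\<in>UNIV. c' j *s b' j) \<and>
      (\<forall>j l. j \<notin> J \<longrightarrow> l \<notin> J \<longrightarrow> c' j \<noteq> 0 \<longrightarrow> c' l \<noteq> 0 \<longrightarrow> j = l)"
    if "lattice_basis b" "x = (\<Sum>j\<in>UNIV. c j *s b j)" for b c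
    using that
  proof (induction "\<Sum>j\<in>-J. nat \<bar>c j\<bar>" arbitrary: b c rule: less_induct)
    case less
    show ?case
    proof (cases "\<forall>j l. j \<notin> J \<longrightarrow> l \<notin> J \<longrightarrow> c j \<noteq> 0 \<longrightarrow> c l \<noteq> 0 \<longrightarrow> j = l")
      case True
      then show ?thesis using less.prems by blast
    next
      case False
      then obtain j0 l0 where jl0: "j0 \<notin> J" "l0 \<notin> J" "c j0 \<noteq> 0" "c l0 \<noteq> 0" "j0 \<noteq> l0"
        by blast
      obtain j l where jl: "j \<notin> J" "l \<notin> J" "c j \<noteq> 0" "c l \<noteq> 0" "j \<noteq> l" "\<bar>c j\<bar> \<le> \<bar>c l\<bar>"
      proof (cases "\<bar>c j0\<bar> \<le> \<bar>c l0\<bar>")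
        case True
        then show ?thesis using that jl0 by blast
      next
        case False
        then show ?thesis using that[of l0 j0] jl0 by auto
      qed
      \<comment> \<open>Euclidean step: replacing \<open>b j\<close> by \<open>b j + s b l\<close> lowers \<open>\<bar>c l\<bar>\<close> by \<open>\<bar>c j\<bar>\<close>.\<close>
      define s where "s = sgn (c l) * sgn (c j)"
      define b1 where "b1 = b(j := b j + s *s b l)"
      define c1 where "c1 = c(l := c l - s * c j)"
      have "(\<Sum>i\<in>UNIV. (if i = l then s else 0) *s b i) = (\<Sum>i\<in>UNIV. if i = l then s *s b l else 0)"
        by (rule sum.cong) (auto simp: vec_eq_iff)
      then have "b1 = b(j := 1 *s b j + (\<Sum>i\<in>UNIV. (if i = l then s else 0) *s b i))"
        by (simp add: b1_def)
      then have B1: "lattice_basis b1"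
        by (simp only:) (rule lattice_basis_fun_upd[OF less.prems(1)], use jl(5) in auto)
      have T: "c1 i *s b1 i = c i *s b i + ((if i = j then (c j * s) *s b l else 0)
          + (if i = l then (-(s * c j)) *s b l else 0))" for i
        using jl(5) by (auto simp: c1_def b1_def vec_eq_iff algebra_simps)
      have X1: "x = (\<Sum>i\<in>UNIV. c1 i *s b1 i)"
        unfolding T sum.distrib using less.prems(2)
        by (simp add: vec_eq_iff algebra_simps if_distrib cong: if_cong)
      have "\<bar>c l - s * c j\<bar> < \<bar>c l\<bar>"
        using jl(3,4,6) unfolding s_def by (auto simp: sgn_if abs_if)
      then have "nat \<bar>c1 l\<bar> + (\<Sum>i\<in>-J-{l}. nat \<bar>c1 i\<bar>) < nat \<bar>c l\<bar> + (\<Sum>i\<in>-J-{l}. nat \<bar>c i\<bar>)"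
        by (simp add: c1_def)
      then have "(\<Sum>i\<in>-J. nat \<bar>c1 i\<bar>) < (\<Sum>i\<in>-J. nat \<bar>c i\<bar>)"
        using jl(2) by (simp add: sum.remove)
      from less.hyps[OF this B1 X1] obtain b' c' where R: "lattice_basis b'" "\<forall>i\<in>J. b' i = b1 i"
        "x = (\<Sum>i\<in>UNIV. c' i *s b' i)"
        "\<forall>j l. j \<notin> J \<longrightarrow> l \<notin> J \<longrightarrow> c' j \<noteq> 0 \<longrightarrow> c' l \<noteq> 0 \<longrightarrow> j = l"
        by blast
      then show ?thesis using jl(1) by (auto simp: b1_def)
    qed
  qed
  moreover obtain c where "x = (\<Sum>j\<in>UNIV. c j *s b j)"
    using assms by (rule lattice_basis_spans)
  ultimately show thesis
    using that assms by blast
qed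

lemma lattice_basis_extend:
  fixes b :: "'n::finite \<Rightarrow> int^'n" and J :: "'n set"
  assumes B: "lattice_basis b"
    and primitive_mod: "\<And>a m y. x + (\<Sum>j\<in>J. a j *s b j) = m *s y \<Longrightarrow> m dvd 1"
  obtains b' j0 where "lattice_basis b'" "j0 \<notin> J" "\<forall>j\<in>J. b' j = b j" "b' j0 = x"
proof -
  obtain b' c where B': "lattice_basis b'" and bJ: "\<forall>j\<in>J. b' j = b j"
    and x: "x = (\<Sum>j\<in>UNIV. c j *s b' j)"
    and single: "\<And>j l. j \<notin> J \<Longrightarrow> l \<notin> J \<Longrightarrow> c j \<noteq> 0 \<Longrightarrow> c l \<noteq> 0 \<Longrightarrow> j = l"
    using lattice_basis_concentrate_outside[OF B, of J x] by blast
  have "(\<Sum>j\<in>UNIV. c j *s b' j) = (\<Sum>j\<in>J. c j *s b' j) + (\<Sum>j\<in>-J. c j *s b' j)"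
    using sum.subset_diff[of J UNIV] by (simp add: Compl_eq_Diff_UNIV add.commute)
  also have "(\<Sum>j\<in>J. c j *s b' j) = (\<Sum>j\<in>J. c j *s b j)"
    using bJ by simp
  finally have x_minus: "x + (\<Sum>j\<in>J. (- c j) *s b j) = (\<Sum>j\<in>-J. c j *s b' j)"
    unfolding x by (simp add: vec_eq_iff sum_negf)
  have "\<exists>j0. j0 \<notin> J \<and> c j0 \<noteq> 0"
  proof (rule ccontr)
    assume "\<nexists>j0. j0 \<notin> J \<and> c j0 \<noteq> 0"
    then have "x + (\<Sum>j\<in>J. (- c j) *s b j) = 0 *s 0"
      unfolding x_minus by (auto intro!: sum.neutral)
    from primitive_mod[OF this] show False by simp
  qed
  then obtain j0 where j0: "j0 \<notin> J" "c j0 \<noteq> 0" by blast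
  have "(\<Sum>j\<in>-J. c j *s b' j) = c j0 *s b' j0"
    using j0 single by (subst sum.remove[of _ j0]) (auto intro!: sum.neutral)
  then have x_rest: "x + (\<Sum>j\<in>J. (- c j) *s b j) = c j0 *s b' j0"
    using x_minus by simp
  then have "c j0 dvd 1" by (rule primitive_mod)
  then have "\<bar>c j0\<bar> = 1" by (simp only: zdvd1_eq)
  then have unit: "c j0 * c j0 = 1"
    using abs_mult_self_eq[of "c j0"] by simp
  define d where "d l = (if l \<in> J then c l else 0)" for l
  have "(\<Sum>l\<in>UNIV. d l *s b' l) = (\<Sum>l\<in>UNIV. if l \<in> J then c l *s b' l else 0)"
    by (rule sum.cong) (auto simp: d_def)
  also have "\<dots> = (\<Sum>j\<in>J. c j *s b j)"
    using bJ by (simp add: sum.If_cases)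
  also have "\<dots> = x - c j0 *s b' j0"
    using x_rest by (simp add: vec_eq_iff sum_negf algebra_simps)
  finally have "c j0 *s b' j0 + (\<Sum>l\<in>UNIV. d l *s b' l) = x"
    by simp
  moreover have "lattice_basis (b'(j0 := c j0 *s b' j0 + (\<Sum>l\<in>UNIV. d l *s b' l)))"
    using j0(1) by (intro lattice_basis_fun_upd[OF B' unit]) (simp add: d_def)
  ultimately have "lattice_basis (b'(j0 := x))" by simp
  from that[OF this j0(1)] show thesis
    using j0(1) bJ by auto
qed

lemma lattice_basis_extend_sequence:
  fixes v :: "nat \<Rightarrow> int^'n::finite"
  assumes "\<And>K a m y. K < k \<Longrightarrow> v (Suc K) + (\<Sum>i\<in>{1..K}. a i *s v i) = m *s y \<Longrightarrow> m dvd 1"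
  shows "\<exists>b f. lattice_basis b \<and> inj_on f {1..k} \<and> (\<forall>i\<in>{1..k}. b (f i) = v i)"
  using assms
proof (induction k)
  case 0
  show ?case using lattice_basis_axis by fastforce
next
  case (Suc k)
  have "\<exists>b f. lattice_basis b \<and> inj_on f {1..k} \<and> (\<forall>i\<in>{1..k}. b (f i) = v i)"
    using Suc.prems by (intro Suc.IH) (meson less_SucI)
  then obtain b f where B: "lattice_basis b" and inj: "inj_on f {1..k}"
    and bf: "\<forall>i\<in>{1..k}. b (f i) = v i"
    by blast
  have "m dvd 1" if "v (Suc k) + (\<Sum>j\<in>f ` {1..k}. a j *s b j) = m *s y" for a m y
  proof -
    have "(\<Sum>j\<in>f ` {1..k}. a j *s b j) = (\<Sum>i\<in>{1..k}. a (f i) *s v i)"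
      unfolding sum.reindex[OF inj] o_def using bf by (intro sum.cong) auto
    then show ?thesis
      using that by (intro Suc.prems[of k "a \<circ> f"]) simp_all
  qed
  then obtain b' j0 where B': "lattice_basis b'" and j0: "j0 \<notin> f ` {1..k}"
    and b'f: "\<forall>j\<in>f ` {1..k}. b' j = b j" and b'j0: "b' j0 = v (Suc k)"
    by (rule lattice_basis_extend[OF B])
  define f' where "f' = f(Suc k := j0)"
  have f'_old: "f' i = f i" if "i \<in> {1..k}" for i
    using that by (simp add: f'_def)
  have dom: "{1..Suc k} = insert (Suc k) {1..k}" by auto
  have "inj_on f' {1..Suc k}"
    unfolding dom f'_def using inj j0 by (simp add: inj_on_fun_updI)
  moreover have "\<forall>i\<in>{1..Suc k}. b' (f' i) = v i"
    unfolding dom using b'j0 b'f bf by (simp add: f'_old f'_def)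
  ultimately show ?case
    using B' by blast
qed

lemma pairing_lincomb: "pairing (\<Sum>i\<in>I. a i *s w i) \<rho> = (\<Sum>i\<in>I. a i * pairing (w i) \<rho>)"
  unfolding pairing_def
  by (simp add: sum_distrib_left sum_distrib_right mult.assoc sum.swap[where A=I])

lemma pairing_smult: "pairing (m *s w) \<rho> = m * pairing w \<rho>"
  unfolding pairing_def by (simp add: sum_distrib_left mult.assoc)

lemma dvd_coeffs_if_unitriangular:
  fixes K j :: nat and m :: int
  assumes diag: "\<And>i. i \<in> {1..K} \<Longrightarrow> pairing (v i) (\<rho> i) = -1"
    and upper: "\<And>i j. i \<in> {1..K} \<Longrightarrow> j \<in> {1..<i} \<Longrightarrow> pairing (v i) (\<rho> j) = 0"
    and eq: "(\<Sum>i\<in>{1..K}. a i *s v i) = m *s w"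
  shows "j \<in> {1..K} \<Longrightarrow> m dvd a j"
proof (induction j rule: less_induct)
  case (less j)
  let ?p = "\<lambda>i. a i * pairing (v i) (\<rho> j)"
  have "{1..K} = {1..<j} \<union> {j..K}"
    using less.prems by auto
  then have "(\<Sum>i\<in>{1..K}. ?p i) = (\<Sum>i\<in>{1..<j}. ?p i) + (\<Sum>i\<in>{j..K}. ?p i)"
    by (simp only:) (rule sum.union_disjoint, auto)
  also have "(\<Sum>i\<in>{j..K}. ?p i) = ?p j + (\<Sum>i\<in>{Suc j..K}. ?p i)"
    using less.prems by (intro sum.atLeast_Suc_atMost) simp
  also have "(\<Sum>i\<in>{Suc j..K}. ?p i) = 0"
    using less.prems by (intro sum.neutral) (simp add: upper)
  finally have "a j = (\<Sum>i\<in>{1..<j}. ?p i) - m * pairing w (\<rho> j)"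
    using arg_cong[OF eq, of "\<lambda>x. pairing x (\<rho> j)"] less.prems
    by (simp add: pairing_lincomb pairing_smult diag)
  moreover have "m dvd (\<Sum>i\<in>{1..<j}. ?p i)"
    using less.prems by (intro dvd_sum dvd_mult2 less.IH) auto
  ultimately show "m dvd a j" by simp
qed

lemma amenable_dvd_coeffs:
  fixes m :: int
  assumes am: "amenable k E v" and nonempty: "\<forall>j\<in>{1..k}. E j \<noteq> {}"
    and "K \<le> k" and "(\<Sum>i\<in>{1..K}. a i *s v i) = m *s w" and "j \<in> {1..K}"
  shows "m dvd a j"
proof -
  define \<rho> where "\<rho> j = (SOME r. r \<in> E j)" for j
  have \<rho>: "\<rho> j \<in> E j" if "j \<in> {1..k}" for j
    using nonempty that by (simp add: \<rho>_def some_in_eq)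
  show ?thesis
  proof (rule dvd_coeffs_if_unitriangular[of K v \<rho>])
    show "pairing (v i) (\<rho> i) = -1" if "i \<in> {1..K}" for i
      using am \<rho> that \<open>K \<le> k\<close> unfolding amenable_def by auto
    show "pairing (v i) (\<rho> j) = 0" if "i \<in> {1..K}" "j \<in> {1..<i}" for i j
      using am \<rho> that \<open>K \<le> k\<close> unfolding amenable_def by auto
  qed fact+
qed

lemma amenable_primitive_mod_predecessors:
  fixes m :: int
  assumes am: "amenable k E v" and nonempty: "\<forall>j\<in>{1..k}. E j \<noteq> {}"
    and "K < k" and "v (Suc K) + (\<Sum>i\<in>{1..K}. a i *s v i) = m *s y"
  shows "m dvd 1"
proof -
  have "(\<Sum>i\<in>{1..K}. (a(Suc K := 1)) i *s v i) = (\<Sum>i\<in>{1..K}. a i *s v i)"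
    by (rule sum.cong) auto
  then have "(\<Sum>i\<in>{1..Suc K}. (a(Suc K := 1)) i *s v i) = m *s y"
    using assms(4) by (simp add: add.commute)
  then have "m dvd (a(Suc K := 1)) (Suc K)"
    using \<open>K < k\<close> by (intro amenable_dvd_coeffs[OF am nonempty, where K = "Suc K"]) auto
  then show ?thesis by simp
qed

lemma saturated_zspanI:
  assumes "\<And>a m w j. (\<Sum>i\<in>{1..k}. a i *s v i) = m *s w \<Longrightarrow> j \<in> {1..k} \<Longrightarrow> m dvd a j"
  shows "saturated (zspan k v)"
  unfolding saturated_def
proof (intro allI impI, elim conjE)
  fix m :: int and w assume "m \<noteq> 0" and "m *s w \<in> zspan k v"
  then obtain a where a: "(\<Sum>i\<in>{1..k}. a i *s v i) = m *s w"
    unfolding zspan_def by auto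
  have "m *s (\<Sum>i\<in>{1..k}. (a i div m) *s v i) = (\<Sum>i\<in>{1..k}. (m * (a i div m)) *s v i)"
    by (simp add: vec_eq_iff sum_distrib_left mult.assoc)
  also have "\<dots> = m *s w"
    using assms[OF a] a by (simp add: dvd_mult_div_cancel)
  finally have "w = (\<Sum>i\<in>{1..k}. (a i div m) *s v i)"
    using \<open>m \<noteq> 0\<close> by (simp add: vec_eq_iff)
  then show "w \<in> zspan k v"
    unfolding zspan_def by (auto intro: exI[of _ "\<lambda>i. a i div m"])
qed

theorem proposition2p3:
  fixes \<Sigma> :: "(real^'n) set set" and k :: nat and E :: "nat \<Rightarrow> (int^'n) set"
    and \<phi> :: "nat \<Rightarrow> real^'n \<Rightarrow> real" and v :: "nat \<Rightarrow> int^'n"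
  assumes "complete_fan \<Sigma>"
    and "Q_nef_partition \<Sigma> k E \<phi>"
    and "amenable k E v"
  shows "saturated (zspan k v) \<and>
         (\<exists>b::'n \<Rightarrow> int^'n. lattice_basis b \<and> (\<forall>i\<in>{1..k}. \<exists>j. b j = v i))"
proof
  have nonempty: "\<forall>j\<in>{1..k}. E j \<noteq> {}"
    using assms(2) unfolding Q_nef_partition_def by auto
  show "saturated (zspan k v)"
    using amenable_dvd_coeffs[OF assms(3) nonempty order_refl] by (rule saturated_zspanI)
  obtain b f where "lattice_basis b" "\<forall>i\<in>{1..k}. b (f i) = v i"
    using lattice_basis_extend_sequence amenable_primitive_mod_predecessors[OF assms(3) nonempty]
    by blast
  then show "\<exists>b::'n \<Rightarrow> int^'n. lattice_basis b \<and> (\<forall>i\<in>{1..k}. \<exists>j. b j = v i)"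
    by blast
qed

end
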